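(* Let $\mathbf G$ be a power-associative loop such that $\lvert\mathrm{Cen}(\mathcal G(\mathbf G))\rvert>1$. Then: (a) either $\mathbf G\cong(\mathbb Z,+)$, or all elements of $\mathbf G$ have finite order; (b) $\mathbf G\cong(\mathbb Z,+)$ if and only if $G$ is the union of countably infinitely many $\equiv_{\mathbf G}$-classes of cardinality $2$ and exactly one $\equiv_{\mathbf G}$-class of cardinality $3$.
   Context: A loop is called power-associative if every subloop generated by one element is a group; for such a loop, $x^n$ ($n\in\mathbb Z$) and the order $o(x)$ are defined within the cyclic group $\langle x\rangle$, and $e_{\mathbf G}$ denotes the identity. The power graph $\mathcal G(\mathbf G)$ is the simple graph with vertex set $G$ in which distinct $x,y$ are adjacent if $y=x^n$ or $x=y^n$ for some $n\in\mathbb Z$. The center of the power graph is $\mathrm{Cen}(\mathcal G(\mathbf G))=\{x\in G\mid x\text{ is adjacent to every }y\in G\setminus\{x\}\}$. For vertices $x,y$, write $x\equiv_{\mathbf G}y$ if $x$ and $y$ have the same closed neighborhood in $\mathcal G(\mathbf G)$. *)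

theory Defs
  imports "HOL-Library.Countable_Set"
begin

definition loop :: "'a set \<Rightarrow> ('a \<Rightarrow> 'a \<Rightarrow> 'a) \<Rightarrow> 'a \<Rightarrow> bool" where
  "loop G mult e \<longleftrightarrow>
     e \<in> G \<and> (\<forall>a\<in>G. \<forall>b\<in>G. mult a b \<in> G) \<and>
     (\<forall>a\<in>G. mult e a = a \<and> mult a e = a) \<and>
     (\<forall>a\<in>G. \<forall>b\<in>G. \<exists>!x. x \<in> G \<and> mult a x = b) \<and>
     (\<forall>a\<in>G. \<forall>b\<in>G. \<exists>!y. y \<in> G \<and> mult y a = b)"

definition ldiv :: "'a set \<Rightarrow> ('a \<Rightarrow> 'a \<Rightarrow> 'a) \<Rightarrow> 'a \<Rightarrow> 'a \<Rightarrow> 'a" where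
  "ldiv G mult a b = (THE x. x \<in> G \<and> mult a x = b)"

definition rdiv :: "'a set \<Rightarrow> ('a \<Rightarrow> 'a \<Rightarrow> 'a) \<Rightarrow> 'a \<Rightarrow> 'a \<Rightarrow> 'a" where
  "rdiv G mult b a = (THE y. y \<in> G \<and> mult y a = b)"

inductive_set subloop_gen :: "'a set \<Rightarrow> ('a \<Rightarrow> 'a \<Rightarrow> 'a) \<Rightarrow> 'a \<Rightarrow> 'a \<Rightarrow> 'a set"
  for G mult e x where
  gen: "x \<in> subloop_gen G mult e x"
| unit: "e \<in> subloop_gen G mult e x"
| mult: "a \<in> subloop_gen G mult e x \<Longrightarrow> b \<in> subloop_gen G mult e x \<Longrightarrow> mult a b \<in> subloop_gen G mult e x"
| ldiv: "a \<in> subloop_gen G mult e x \<Longrightarrow> b \<in> subloop_gen G mult e x \<Longrightarrow> ldiv G mult a b \<in> subloop_gen G mult e x"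
| rdiv: "a \<in> subloop_gen G mult e x \<Longrightarrow> b \<in> subloop_gen G mult e x \<Longrightarrow> rdiv G mult a b \<in> subloop_gen G mult e x"

text \<open>Power-associative: every one-generated subloop is a group (i.e. associative,
 as it is already a loop).\<close>
definition power_assoc_loop :: "'a set \<Rightarrow> ('a \<Rightarrow> 'a \<Rightarrow> 'a) \<Rightarrow> 'a \<Rightarrow> bool" where
  "power_assoc_loop G mult e \<longleftrightarrow> loop G mult e \<and>
     (\<forall>x\<in>G. \<forall>a\<in>subloop_gen G mult e x. \<forall>b\<in>subloop_gen G mult e x. \<forall>c\<in>subloop_gen G mult e x.
        mult (mult a b) c = mult a (mult b c))"

fun npow :: "('a \<Rightarrow> 'a \<Rightarrow> 'a) \<Rightarrow> 'a \<Rightarrow> 'a \<Rightarrow> nat \<Rightarrow> 'a" where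
  "npow mult e x 0 = e"
| "npow mult e x (Suc n) = mult x (npow mult e x n)"

definition zpow :: "'a set \<Rightarrow> ('a \<Rightarrow> 'a \<Rightarrow> 'a) \<Rightarrow> 'a \<Rightarrow> 'a \<Rightarrow> int \<Rightarrow> 'a" where
  "zpow G mult e x n = (if 0 \<le> n then npow mult e x (nat n)
                        else ldiv G mult (npow mult e x (nat (- n))) e)"

definition finite_order :: "('a \<Rightarrow> 'a \<Rightarrow> 'a) \<Rightarrow> 'a \<Rightarrow> 'a \<Rightarrow> bool" where
  "finite_order mult e x \<longleftrightarrow> (\<exists>n::nat. n > 0 \<and> npow mult e x n = e)"

definition pg_adj :: "'a set \<Rightarrow> ('a \<Rightarrow> 'a \<Rightarrow> 'a) \<Rightarrow> 'a \<Rightarrow> 'a \<Rightarrow> 'a \<Rightarrow> bool" where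
  "pg_adj G mult e x y \<longleftrightarrow> x \<in> G \<and> y \<in> G \<and> x \<noteq> y \<and>
     (\<exists>n::int. y = zpow G mult e x n \<or> x = zpow G mult e y n)"

definition pg_center :: "'a set \<Rightarrow> ('a \<Rightarrow> 'a \<Rightarrow> 'a) \<Rightarrow> 'a \<Rightarrow> 'a set" where
  "pg_center G mult e = {x \<in> G. \<forall>y \<in> G - {x}. pg_adj G mult e x y}"

definition closed_nbhd :: "'a set \<Rightarrow> ('a \<Rightarrow> 'a \<Rightarrow> 'a) \<Rightarrow> 'a \<Rightarrow> 'a \<Rightarrow> 'a set" where
  "closed_nbhd G mult e x = insert x {y \<in> G. pg_adj G mult e x y}"

definition nbhd_class :: "'a set \<Rightarrow> ('a \<Rightarrow> 'a \<Rightarrow> 'a) \<Rightarrow> 'a \<Rightarrow> 'a \<Rightarrow> 'a set" where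
  "nbhd_class G mult e x = {y \<in> G. closed_nbhd G mult e y = closed_nbhd G mult e x}"

definition nbhd_classes :: "'a set \<Rightarrow> ('a \<Rightarrow> 'a \<Rightarrow> 'a) \<Rightarrow> 'a \<Rightarrow> 'a set set" where
  "nbhd_classes G mult e = nbhd_class G mult e ` G"

definition iso_to_int :: "'a set \<Rightarrow> ('a \<Rightarrow> 'a \<Rightarrow> 'a) \<Rightarrow> bool" where
  "iso_to_int G mult \<longleftrightarrow> (\<exists>f. bij_betw f G (UNIV :: int set) \<and>
      (\<forall>a\<in>G. \<forall>b\<in>G. f (mult a b) = f a + f b))"

end

theory Submission
  imports Defs "HOL-Algebra.Multiplicative_Group" "HOL-Number_Theory.Totient"
begin

text \<open>The power graph only sees the subloops \<open>\<langle>x\<rangle>\<close>, which are cyclic groups by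
  power-associativity. A central vertex \<open>x \<noteq> e\<close> is comparable with every element. If some
  element has infinite order, so has \<open>x\<close>, and comparing \<open>x = y\<^sup>n\<close> with all powers \<open>y\<^sup>v\<close>
  shows that every \<open>y\<close> is a power of \<open>x\<close>: the loop is \<open>\<int>\<close>, whose \<open>\<equiv>\<close>-classes are
  \<open>{-1, 0, 1}\<close> and the pairs \<open>{u, -u}\<close> with \<open>\<bar>u\<bar> \<ge> 2\<close>. In a torsion loop whose classes
  have at most three elements, the \<open>\<phi>(o(y))\<close> generators of \<open>\<langle>y\<rangle>\<close> are \<open>\<equiv>\<close>-equivalent to \<open>y\<close>,
  so all orders lie in \<open>{1, 2, 3, 4, 6}\<close>; centrality of \<open>x\<close> then forces \<open>o(x) = 2\<close> and
  \<open>o(y) = 4\<close> outside \<open>\<langle>x\<rangle>\<close>, and if the loop is infinite every class has at most two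
  elements.\<close>

lemma coprime_if_eq_mult_add:
  fixes a c k n :: nat
  assumes "n = k * a + c" "coprime a c"
  shows "coprime a n"
  using assms by (simp add: coprime_iff_gcd_eq_1 gcd_add_mult)

lemma totient_ge_4:
  assumes "n > 0" "n \<notin> {1, 2, 3, 4, 6}"
  shows "4 \<le> totient n"
proof -
  have "\<exists>A. A \<subseteq> totatives n \<and> card A = 4"
  proof (cases "odd n")
    case True
    then have n5: "n \<ge> 5" using assms by (auto elim!: oddE)
    have "coprime (n - 2) n"
      by (rule coprime_if_eq_mult_add[of n 1 "n - 2" 2]) (use True n5 in auto)
    moreover have "coprime 2 n" using True by simp
    moreover have "coprime (n - 1) n" using n5 coprime_diff_one_left_nat[of n] by simp
    ultimately have "{1, 2, n - 2, n - 1} \<subseteq> totatives n" using n5 by (auto simp: in_totatives_iff)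
    moreover have "card {1, 2, n - 2, n - 1} = 4" using n5 by (simp add: card_insert_if) linarith
    ultimately show ?thesis by blast
  next
    case False
    then obtain r where r: "n = 2 * r" by (auto elim!: evenE)
    show ?thesis
    proof (cases "even r")
      case True
      then obtain q where q: "n = 4 * q" using r by (auto elim!: evenE)
      have q2: "q \<ge> 2" using assms q by auto
      have c1: "coprime (2 * q - 1) n"
        by (rule coprime_if_eq_mult_add[of n 2 "2 * q - 1" 2]) (use q q2 in auto)
      have "coprime (2 * q + 1) (2 * q - 1)"
        by (rule coprime_if_eq_mult_add[of "2 * q + 1" 1 "2 * q - 1" 2,
              THEN coprime_commute[THEN iffD1]]) (use q2 in auto)
      then have c2: "coprime (2 * q + 1) n"
        by (rule coprime_if_eq_mult_add[of n 1 "2 * q + 1" "2 * q - 1", rotated]) (use q q2 in auto)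
      have "coprime (4 * q - 1) n" using q q2 coprime_diff_one_left_nat[of n] by simp
      with c1 c2 have "{1, 2 * q - 1, 2 * q + 1, 4 * q - 1} \<subseteq> totatives n"
        using q2 q by (auto simp: in_totatives_iff)
      moreover have "card {1, 2 * q - 1, 2 * q + 1, 4 * q - 1} = 4" using q2 by (simp add: card_insert_if) linarith
      ultimately show ?thesis by blast
    next
      case False
      then obtain q where q: "n = 4 * q + 2" using r by (auto elim!: oddE)
      have q2: "q \<ge> 2" using assms q by auto
      have "odd (2 * q - 1)" using q2 by presburger
      then have "coprime (2 * q - 1) (2 ^ 2)"
        by (simp only: coprime_power_right_iff coprime_right_2_iff_odd) simp
      then have c0: "coprime (2 * q - 1) 4" by simp
      have c1: "coprime (2 * q - 1) n"
        by (rule coprime_if_eq_mult_add[of n 2 "2 * q - 1" 4]) (use q q2 c0 in auto)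
      have "coprime (2 * q + 3) (2 * q - 1)"
        by (rule coprime_if_eq_mult_add[of "2 * q + 3" 1 "2 * q - 1" 4,
              THEN coprime_commute[THEN iffD1]]) (use q2 c0 in auto)
      then have c2: "coprime (2 * q + 3) n"
        by (rule coprime_if_eq_mult_add[of n 1 "2 * q + 3" "2 * q - 1", rotated]) (use q q2 in auto)
      have "coprime (4 * q + 1) n" using q coprime_diff_one_left_nat[of n] by simp
      with c1 c2 have "{1, 2 * q - 1, 2 * q + 3, 4 * q + 1} \<subseteq> totatives n"
        using q2 q by (auto simp: in_totatives_iff)
      moreover have "card {1, 2 * q - 1, 2 * q + 3, 4 * q + 1} = 4" using q2 by (simp add: card_insert_if) linarith
      ultimately show ?thesis by blast
    qed
  qed
  then show ?thesis unfolding totient_def by (metis card_mono finite_totatives)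
qed

text \<open>The closed neighbourhood of \<open>u\<close> in the power graph of \<open>(\<int>, +)\<close>.\<close>
definition dvd_comparable :: "int \<Rightarrow> int set" where
  "dvd_comparable u = {v. u dvd v \<or> v dvd u}"

definition dvd_class :: "int \<Rightarrow> int set" where
  "dvd_class u = {v. dvd_comparable v = dvd_comparable u}"

lemma dvd_comparable_uminus [simp]: "dvd_comparable (- u) = dvd_comparable u"
  unfolding dvd_comparable_def by auto

lemma dvd_comparable_eq_UNIV_iff: "dvd_comparable u = UNIV \<longleftrightarrow> \<bar>u\<bar> \<le> 1"
proof
  assume all: "dvd_comparable u = UNIV"
  show "\<bar>u\<bar> \<le> 1"
  proof (rule ccontr)
    assume u: "\<not> \<bar>u\<bar> \<le> 1"
    from all have "u dvd 2 * u + 1 \<or> 2 * u + 1 dvd u" unfolding dvd_comparable_def by blast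
    then show False
    proof
      assume "u dvd 2 * u + 1"
      then have "u dvd 1" by (simp add: dvd_add_right_iff)
      then show False using u by auto
    next
      assume "2 * u + 1 dvd u"
      then have "\<bar>2 * u + 1\<bar> \<le> \<bar>u\<bar>" using u by (intro dvd_imp_le_int) auto
      then show False using u by auto
    qed
  qed
next
  assume "\<bar>u\<bar> \<le> 1"
  then have "u = 0 \<or> u = 1 \<or> u = -1" by auto
  then show "dvd_comparable u = UNIV" unfolding dvd_comparable_def by auto
qed

text \<open>If \<open>v = u k\<close> with \<open>\<bar>k\<bar> \<ge> 2\<close>, then \<open>u (2k + 1)\<close> is comparable with \<open>u\<close> but not with \<open>v\<close>.\<close>
lemma dvd_comparable_eq_dvd_imp_abs_eq:
  assumes "\<bar>u\<bar> \<ge> 2" "dvd_comparable u = dvd_comparable v" "u dvd v"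
  shows "\<bar>u\<bar> = \<bar>v\<bar>"
proof (rule ccontr)
  assume ne: "\<bar>u\<bar> \<noteq> \<bar>v\<bar>"
  obtain k where k: "v = u * k" using assms(3) by blast
  have u0: "u \<noteq> 0" using assms by auto
  have k1: "\<bar>k\<bar> \<noteq> 1" using ne k by (auto simp: abs_mult)
  have "u * (2 * k + 1) \<in> dvd_comparable u" unfolding dvd_comparable_def by simp
  then have "u * k dvd u * (2 * k + 1) \<or> u * (2 * k + 1) dvd u * k"
    using assms(2) k unfolding dvd_comparable_def by simp
  then have "k dvd 2 * k + 1 \<or> 2 * k + 1 dvd k" using u0 by simp
  then show False
  proof
    assume "k dvd 2 * k + 1"
    then have "k dvd 1" by (simp add: dvd_add_right_iff)
    then show False using k1 by simp
  next
    assume "2 * k + 1 dvd k"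
    moreover have "k \<noteq> 0"
      using k assms(1,2) dvd_comparable_eq_UNIV_iff[of 0] dvd_comparable_eq_UNIV_iff[of u] by auto
    ultimately have "\<bar>2 * k + 1\<bar> \<le> \<bar>k\<bar>" by (intro dvd_imp_le_int)
    then show False using k1 by arith
  qed
qed

lemma dvd_class_unit:
  assumes "\<bar>u\<bar> \<le> 1"
  shows "dvd_class u = {-1, 0, 1}"
proof -
  have "dvd_class u = {v. \<bar>v\<bar> \<le> 1}"
    unfolding dvd_class_def
    using assms dvd_comparable_eq_UNIV_iff[of u] dvd_comparable_eq_UNIV_iff by presburger
  also have "\<dots> = {-1, 0, 1}" by auto
  finally show ?thesis .
qed

lemma dvd_class_nonunit:
  assumes u: "\<bar>u\<bar> \<ge> 2"
  shows "dvd_class u = {u, -u}"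
proof -
  have "v = u \<or> v = -u" if eq: "dvd_comparable v = dvd_comparable u" for v
  proof -
    have v: "\<bar>v\<bar> \<ge> 2"
      using eq u dvd_comparable_eq_UNIV_iff[of u] dvd_comparable_eq_UNIV_iff[of v] by auto
    have "u \<in> dvd_comparable v" using eq unfolding dvd_comparable_def by simp
    then have "u dvd v \<or> v dvd u" unfolding dvd_comparable_def by auto
    then have "\<bar>u\<bar> = \<bar>v\<bar>" using dvd_comparable_eq_dvd_imp_abs_eq u v eq by metis
    then show ?thesis by (auto simp: abs_if split: if_splits)
  qed
  then show ?thesis unfolding dvd_class_def by auto
qed

lemma card_dvd_class: "card (dvd_class u) = (if \<bar>u\<bar> \<le> 1 then 3 else 2)"
proof (cases "\<bar>u\<bar> \<le> 1")
  case True
  then show ?thesis using dvd_class_unit by simp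
next
  case False
  then have "u \<noteq> -u" by arith
  then show ?thesis using dvd_class_nonunit[of u] False by simp
qed

lemma proper_divisor_comparable_quotient:
  fixes n d :: nat
  assumes n: "n \<in> {1, 2, 3, 4, 6}" and d: "d dvd n" "d \<noteq> 1" "d \<noteq> n"
    and comparable: "n div d dvd d \<or> d dvd n div d"
  shows "n = 4 \<and> d = 2"
proof -
  have "d \<le> 6" using dvd_imp_le[OF d(1)] n by auto
  then have "d \<in> {0, 1, 2, 3, 4, 5, 6}" by auto
  then show ?thesis using assms by auto
qed

section \<open>Cyclic subloops of a power-associative loop\<close>

locale pa_loop =
  fixes G :: "'a set" and mult :: "'a \<Rightarrow> 'a \<Rightarrow> 'a" and e :: 'a
  assumes power_assoc: "power_assoc_loop G mult e"
begin

abbreviation zp :: "'a \<Rightarrow> int \<Rightarrow> 'a" where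
  "zp \<equiv> zpow G mult e"

lemma is_loop: "loop G mult e"
  using power_assoc unfolding power_assoc_loop_def by blast

lemma unit_closed: "e \<in> G"
  using is_loop unfolding loop_def by (elim conjE)

lemma mult_closed: "a \<in> G \<Longrightarrow> b \<in> G \<Longrightarrow> mult a b \<in> G"
  using is_loop unfolding loop_def by (elim conjE) simp

lemma unit_left: "a \<in> G \<Longrightarrow> mult e a = a"
  and unit_right: "a \<in> G \<Longrightarrow> mult a e = a"
  using is_loop unfolding loop_def by (elim conjE, simp)+

lemma ldiv_ex1: "a \<in> G \<Longrightarrow> b \<in> G \<Longrightarrow> \<exists>!x. x \<in> G \<and> mult a x = b"
  and rdiv_ex1: "a \<in> G \<Longrightarrow> b \<in> G \<Longrightarrow> \<exists>!y. y \<in> G \<and> mult y a = b"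
  using is_loop unfolding loop_def by (elim conjE, simp)+

lemma ldiv_closed: "a \<in> G \<Longrightarrow> b \<in> G \<Longrightarrow> ldiv G mult a b \<in> G"
  using theI'[OF ldiv_ex1] unfolding ldiv_def by blast

lemma ldiv_unique:
  assumes "a \<in> G" "b \<in> G" "z \<in> G" "mult a z = b"
  shows "ldiv G mult a b = z"
  unfolding ldiv_def using the1_equality[OF ldiv_ex1[OF assms(1,2)]] assms(3,4) by blast

lemma
  assumes "a \<in> G" "b \<in> G"
  shows rdiv_closed: "rdiv G mult b a \<in> G" and rdiv_mult: "mult (rdiv G mult b a) a = b"
  using theI'[OF rdiv_ex1[OF assms]] unfolding rdiv_def by auto

lemma subloop_gen_subset:
  assumes "x \<in> G"
  shows "subloop_gen G mult e x \<subseteq> G"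
proof
  fix y assume "y \<in> subloop_gen G mult e x"
  then show "y \<in> G"
    by induction (use assms unit_closed mult_closed ldiv_closed rdiv_closed in auto)
qed

definition gen_group :: "'a \<Rightarrow> 'a monoid" where
  "gen_group x = \<lparr>carrier = subloop_gen G mult e x, monoid.mult = mult, one = e\<rparr>"

lemma gen_group_simps [simp]:
  "carrier (gen_group x) = subloop_gen G mult e x"
  "monoid.mult (gen_group x) = mult"
  "one (gen_group x) = e"
  by (simp_all add: gen_group_def)

lemma group_gen_group: assumes x: "x \<in> G" shows "group (gen_group x)"
proof (rule groupI)
  fix a b c assume "a \<in> carrier (gen_group x)" "b \<in> carrier (gen_group x)" "c \<in> carrier (gen_group x)"
  then show "a \<otimes>\<^bsub>gen_group x\<^esub> b \<otimes>\<^bsub>gen_group x\<^esub> c = a \<otimes>\<^bsub>gen_group x\<^esub> (b \<otimes>\<^bsub>gen_group x\<^esub> c)"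
    using power_assoc x unfolding power_assoc_loop_def by simp
next
  fix a assume a: "a \<in> carrier (gen_group x)"
  then show "\<one>\<^bsub>gen_group x\<^esub> \<otimes>\<^bsub>gen_group x\<^esub> a = a"
    using subloop_gen_subset[OF x] unit_left by auto
  have "rdiv G mult e a \<in> subloop_gen G mult e x"
    using a by (intro subloop_gen.rdiv subloop_gen.unit) simp
  moreover have "mult (rdiv G mult e a) a = e"
    using a subloop_gen_subset[OF x] rdiv_mult unit_closed by auto
  ultimately show "\<exists>y\<in>carrier (gen_group x). y \<otimes>\<^bsub>gen_group x\<^esub> a = \<one>\<^bsub>gen_group x\<^esub>" by auto
qed (simp_all add: subloop_gen.unit subloop_gen.mult)

lemma nat_pow_gen_group:
  assumes "x \<in> G" "y \<in> subloop_gen G mult e x"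
  shows "y [^]\<^bsub>gen_group x\<^esub> n = npow mult e y n"
proof (induction n)
  case (Suc n)
  have "y [^]\<^bsub>gen_group x\<^esub> Suc n = mult y (y [^]\<^bsub>gen_group x\<^esub> n)"
    using monoid.nat_pow_Suc2[OF group.is_monoid[OF group_gen_group[OF assms(1)]]] assms(2) by simp
  then show ?case using Suc by simp
qed simp

lemma zpow_eq_int_pow:
  assumes x: "x \<in> G" and y: "y \<in> subloop_gen G mult e x"
  shows "zp y k = y [^]\<^bsub>gen_group x\<^esub> k"
proof (cases "0 \<le> k")
  case True
  then show ?thesis using nat_pow_gen_group[OF x y] by (simp add: zpow_def int_pow_def2)
next
  case False
  interpret gx: group "gen_group x" by (rule group_gen_group[OF x])
  let ?a = "y [^]\<^bsub>gen_group x\<^esub> nat (- k)"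
  have a: "?a \<in> subloop_gen G mult e x" using gx.nat_pow_closed[of y] y by simp
  have inv_a: "inv\<^bsub>gen_group x\<^esub> ?a \<in> subloop_gen G mult e x" using gx.inv_closed[of ?a] a by simp
  have "mult ?a (inv\<^bsub>gen_group x\<^esub> ?a) = e" using gx.r_inv[of ?a] a by simp
  then have "ldiv G mult ?a e = inv\<^bsub>gen_group x\<^esub> ?a"
    using ldiv_unique a inv_a subloop_gen_subset[OF x] unit_closed by blast
  then show ?thesis using False nat_pow_gen_group[OF x y] by (simp add: zpow_def int_pow_def2)
qed

definition cyclic :: "'a \<Rightarrow> 'a set" where
  "cyclic x = range (zp x)"

definition order_of :: "'a \<Rightarrow> nat" where
  "order_of x = group.ord (gen_group x) x"

lemma zp_in_cyclic [simp]: "zp x k \<in> cyclic x"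
  by (simp add: cyclic_def)

lemma zp_0 [simp]: "zp x 0 = e"
  by (simp add: zpow_def)

lemma zp_1 [simp]: "x \<in> G \<Longrightarrow> zp x 1 = x"
  by (simp add: zpow_def unit_right)

lemma unit_in_cyclic: "e \<in> cyclic x"
  using zp_in_cyclic[of x 0] by simp

lemma self_in_cyclic: "x \<in> G \<Longrightarrow> x \<in> cyclic x"
  using zp_in_cyclic[of x 1] by simp

lemma gen_in_gen_group: "x \<in> carrier (gen_group x)"
  by (simp add: subloop_gen.gen)

lemma zp_eq_int_pow_self: "x \<in> G \<Longrightarrow> zp x k = x [^]\<^bsub>gen_group x\<^esub> k"
  by (rule zpow_eq_int_pow[OF _ subloop_gen.gen])

lemma cyclic_eq_generate:
  assumes "x \<in> G"
  shows "cyclic x = generate (gen_group x) {x}"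
  using group.generate_pow[OF group_gen_group[OF assms] gen_in_gen_group] zp_eq_int_pow_self[OF assms]
  unfolding cyclic_def by auto

lemma cyclic_subset_subloop_gen: "x \<in> G \<Longrightarrow> cyclic x \<subseteq> subloop_gen G mult e x"
  using group.int_pow_closed[OF group_gen_group gen_in_gen_group] zp_eq_int_pow_self
  unfolding cyclic_def by auto

lemma cyclic_subset: "x \<in> G \<Longrightarrow> cyclic x \<subseteq> G"
  using cyclic_subset_subloop_gen subloop_gen_subset by blast

lemma zp_closed: "x \<in> G \<Longrightarrow> zp x k \<in> G"
  using cyclic_subset zp_in_cyclic by blast

lemma zp_add:
  assumes "x \<in> G"
  shows "zp x (a + b) = mult (zp x a) (zp x b)"
  using group.int_pow_mult[OF group_gen_group[OF assms] gen_in_gen_group, of a b]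
  by (simp add: zp_eq_int_pow_self[OF assms])

lemma zp_zp:
  assumes x: "x \<in> G"
  shows "zp (zp x k) j = zp x (k * j)"
proof -
  have "zp x k \<in> subloop_gen G mult e x" using cyclic_subset_subloop_gen[OF x] by auto
  then have "zp (zp x k) j = (x [^]\<^bsub>gen_group x\<^esub> k) [^]\<^bsub>gen_group x\<^esub> j"
    using zpow_eq_int_pow[OF x] zp_eq_int_pow_self[OF x] by simp
  also have "\<dots> = zp x (k * j)"
    using group.int_pow_pow[OF group_gen_group[OF x] gen_in_gen_group] zp_eq_int_pow_self[OF x] by simp
  finally show ?thesis .
qed

lemma cyclic_mono: "x \<in> G \<Longrightarrow> a \<in> cyclic x \<Longrightarrow> cyclic a \<subseteq> cyclic x"
  unfolding cyclic_def using zp_zp by auto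

lemma mem_cyclic_iff_subset: "x \<in> G \<Longrightarrow> a \<in> G \<Longrightarrow> a \<in> cyclic x \<longleftrightarrow> cyclic a \<subseteq> cyclic x"
  using cyclic_mono self_in_cyclic by blast

lemma card_cyclic: "x \<in> G \<Longrightarrow> card (cyclic x) = order_of x"
  using group.generate_pow_card[OF group_gen_group gen_in_gen_group] cyclic_eq_generate
  unfolding order_of_def by simp

lemma zp_eq_iff: "x \<in> G \<Longrightarrow> zp x k = zp x j \<longleftrightarrow> int (order_of x) dvd j - k"
  using group.int_pow_eq[OF group_gen_group gen_in_gen_group] zp_eq_int_pow_self
  unfolding order_of_def by simp

lemma zp_eq_unit_iff: "x \<in> G \<Longrightarrow> zp x k = e \<longleftrightarrow> int (order_of x) dvd k"
  using zp_eq_iff[of x k 0] by simp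

lemma finite_order_iff: "x \<in> G \<Longrightarrow> finite_order mult e x \<longleftrightarrow> order_of x \<noteq> 0"
  using group.ord_eq_0[OF group_gen_group gen_in_gen_group] nat_pow_gen_group[OF _ subloop_gen.gen]
  unfolding order_of_def finite_order_def by auto

lemma order_of_eq_1_iff: "x \<in> G \<Longrightarrow> order_of x = 1 \<longleftrightarrow> x = e"
  using group.ord_eq_1[OF group_gen_group gen_in_gen_group] unfolding order_of_def by simp

lemma order_of_subloop:
  assumes x: "x \<in> G" and y: "y \<in> subloop_gen G mult e x"
  shows "group.ord (gen_group x) y = order_of y"
proof -
  have yG: "y \<in> G" using subloop_gen_subset[OF x] y by blast
  have "y [^]\<^bsub>gen_group x\<^esub> n = e \<longleftrightarrow> order_of y dvd n" for n
    using group.pow_eq_id[OF group_gen_group[OF yG] gen_in_gen_group, of n]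
      nat_pow_gen_group[OF x y, of n] nat_pow_gen_group[OF yG subloop_gen.gen, of n]
    unfolding order_of_def by simp
  then show ?thesis using group.ord_unique[OF group_gen_group[OF x], of y] y by simp
qed

lemma order_of_zp_nat:
  assumes x: "x \<in> G"
  shows "order_of (zp x (int k)) = (if k = 0 then 1 else order_of x div gcd (order_of x) k)"
proof -
  have "zp x (int k) = x [^]\<^bsub>gen_group x\<^esub> k"
    using zp_eq_int_pow_self[OF x] by (simp add: int_pow_int)
  moreover have "zp x (int k) \<in> subloop_gen G mult e x"
    using cyclic_subset_subloop_gen[OF x] by auto
  ultimately show ?thesis
    using group.ord_pow_gen[OF group_gen_group[OF x] gen_in_gen_group, of k] order_of_subloop[OF x]
    unfolding order_of_def by simp
qed

lemma order_of_dvd: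
  assumes x: "x \<in> G" and a: "a \<in> cyclic x"
  shows "order_of a dvd order_of x"
proof -
  obtain k where k: "a = zp x k" using a unfolding cyclic_def by blast
  have "zp a (int (order_of x)) = zp x (k * int (order_of x))" using k zp_zp[OF x] by simp
  also have "\<dots> = e" using zp_eq_unit_iff[OF x] by simp
  finally show ?thesis using zp_eq_unit_iff[OF zp_closed[OF x]] k by simp
qed

lemma pg_adj_iff:
  "pg_adj G mult e a b \<longleftrightarrow> a \<in> G \<and> b \<in> G \<and> a \<noteq> b \<and> (b \<in> cyclic a \<or> a \<in> cyclic b)"
  unfolding pg_adj_def cyclic_def by auto

lemma closed_nbhd_eq:
  "b \<in> G \<Longrightarrow> closed_nbhd G mult e b = {w \<in> G. w \<in> cyclic b \<or> b \<in> cyclic w}"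
  unfolding closed_nbhd_def pg_adj_iff using self_in_cyclic by auto

lemma pg_center_closed: "x \<in> pg_center G mult e \<Longrightarrow> x \<in> G"
  unfolding pg_center_def by blast

lemma pg_center_comparable:
  "x \<in> pg_center G mult e \<Longrightarrow> y \<in> G \<Longrightarrow> y \<in> cyclic x \<or> x \<in> cyclic y"
  unfolding pg_center_def pg_adj_iff using self_in_cyclic by auto

lemma closed_nbhd_eq_subset:
  "b \<in> G \<Longrightarrow> closed_nbhd G mult e b = {w \<in> G. cyclic w \<subseteq> cyclic b \<or> cyclic b \<subseteq> cyclic w}"
  using closed_nbhd_eq mem_cyclic_iff_subset by auto

lemma closed_nbhd_pg_center: "x \<in> pg_center G mult e \<Longrightarrow> closed_nbhd G mult e x = G"
  unfolding pg_center_def closed_nbhd_def pg_adj_def by auto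

lemma unit_in_pg_center: "e \<in> pg_center G mult e"
  unfolding pg_center_def pg_adj_iff using unit_closed unit_in_cyclic by auto

subsection \<open>Elements of infinite order\<close>

lemma zp_mem_cyclic_zp_iff:
  assumes y: "y \<in> G" "order_of y = 0"
  shows "zp y a \<in> cyclic (zp y b) \<longleftrightarrow> b dvd a"
proof -
  have "zp y a \<in> cyclic (zp y b) \<longleftrightarrow> (\<exists>k. zp y a = zp y (b * k))"
    unfolding cyclic_def using zp_zp[OF y(1)] by auto
  also have "\<dots> \<longleftrightarrow> (\<exists>k. a = b * k)"
    using zp_eq_iff[OF y(1)] y(2) by auto
  finally show ?thesis by (simp add: dvd_def)
qed

lemma order_of_eq_0_if_mem_cyclic:
  assumes z: "z \<in> G" "order_of z = 0" and x: "x \<in> cyclic z" "x \<noteq> e"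
  shows "order_of x = 0"
proof -
  obtain k where k: "x = zp z k" using x(1) unfolding cyclic_def by blast
  have "zp z (k * int (order_of x)) = zp x (int (order_of x))" using k zp_zp[OF z(1)] by simp
  also have "\<dots> = e" using zp_eq_unit_iff[OF zp_closed[OF z(1)]] k by simp
  finally have "k * int (order_of x) = 0" using zp_eq_unit_iff[OF z(1)] z(2) by simp
  moreover have "k \<noteq> 0" using k x(2) by auto
  ultimately show ?thesis by simp
qed

text \<open>For \<open>y \<notin> \<langle>x\<rangle>\<close> centrality gives \<open>x = y\<^sup>n\<close> and makes every \<open>y\<^sup>v\<close> comparable with
  \<open>y\<^sup>n\<close>, which in \<open>\<int>\<close> forces \<open>n = \<plusminus>1\<close>.\<close>
lemma pg_center_infinite_cyclic:
  assumes xc: "x \<in> pg_center G mult e" and xe: "x \<noteq> e"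
    and z: "z \<in> G" "order_of z = 0"
  shows "order_of x = 0" and "cyclic x = G"
proof -
  have xG: "x \<in> G" using xc by (rule pg_center_closed)
  show ox: "order_of x = 0"
    using pg_center_comparable[OF xc z(1)] order_of_dvd[OF xG] z order_of_eq_0_if_mem_cyclic xe
    by fastforce
  have "y \<in> cyclic x" if y: "y \<in> G" "x \<in> cyclic y" for y
  proof -
    obtain n where n: "x = zp y n" using y(2) unfolding cyclic_def by blast
    have oy: "order_of y = 0" using order_of_dvd[OF y] ox by simp
    have "n dvd v \<or> v dvd n" for v
      using pg_center_comparable[OF xc zp_closed[OF y(1)], of v] n
        zp_mem_cyclic_zp_iff[OF y(1) oy] by auto
    then have "dvd_comparable n = UNIV" unfolding dvd_comparable_def by auto
    then have "\<bar>n\<bar> \<le> 1" by (simp add: dvd_comparable_eq_UNIV_iff)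
    moreover have "n \<noteq> 0" using n xe by auto
    ultimately have "n dvd 1" by auto
    then show "y \<in> cyclic x" using zp_mem_cyclic_zp_iff[OF y(1) oy, of 1 n] n y(1) by simp
  qed
  then show "cyclic x = G" using pg_center_comparable[OF xc] cyclic_subset[OF xG] by blast
qed

lemma infinite_cyclic_iso_to_int:
  assumes x: "x \<in> G" "order_of x = 0" "cyclic x = G"
  shows "iso_to_int G mult"
proof -
  define f where "f = inv_into UNIV (zp x)"
  have inj: "inj (zp x)" using x zp_eq_iff[OF x(1)] unfolding inj_def by auto
  have range: "range (zp x) = G" using x(3) unfolding cyclic_def .
  have "bij_betw f G UNIV"
    unfolding f_def using inj range by (metis bij_betw_imageI bij_betw_inv_into)
  moreover have "f (mult a b) = f a + f b" if "a \<in> G" "b \<in> G" for a b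
  proof -
    have "mult a b = zp x (f a + f b)"
      using that range zp_add[OF x(1)] unfolding f_def by (simp add: f_inv_into_f)
    then show ?thesis unfolding f_def using inj by (simp add: inv_into_f_f)
  qed
  ultimately show ?thesis unfolding iso_to_int_def by blast
qed

lemma hom_to_int_zp:
  assumes hom: "\<forall>a\<in>G. \<forall>b\<in>G. f (mult a b) = f a + (f b :: int)" and a: "a \<in> G"
  shows "f (zp a k) = k * f a"
proof -
  have f_unit: "f e = 0" using hom unit_closed unit_left[OF unit_closed] by force
  have nat: "f (zp a (int n)) = int n * f a" for n
  proof (induction n)
    case (Suc n)
    have "zp a (int (Suc n)) = zp a (int n + 1)" by (simp add: add.commute)
    also have "\<dots> = mult (zp a (int n)) (zp a 1)" by (rule zp_add[OF a])
    finally have "zp a (int (Suc n)) = mult (zp a (int n)) a" using a by simp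
    then show ?case using Suc hom zp_closed[OF a] a by (simp add: algebra_simps)
  qed (simp add: f_unit)
  show ?thesis
  proof (cases "0 \<le> k")
    case True
    then show ?thesis using nat[of "nat k"] by simp
  next
    case False
    have "mult (zp a (- k)) (zp a k) = e" using zp_add[OF a, of "- k" k] by simp
    then have "f (zp a (- k)) + f (zp a k) = 0" using hom zp_closed[OF a] f_unit by metis
    then show ?thesis using nat[of "nat (- k)"] False by (simp add: algebra_simps)
  qed
qed

lemma iso_to_int_infinite_cyclic:
  assumes "iso_to_int G mult"
  obtains x where "x \<in> G" "order_of x = 0" "cyclic x = G"
proof -
  obtain f where f: "bij_betw f G (UNIV :: int set)" and hom: "\<forall>a\<in>G. \<forall>b\<in>G. f (mult a b) = f a + f b"
    using assms unfolding iso_to_int_def by blast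
  obtain x where x: "x \<in> G" "f x = 1" using f by (metis UNIV_I bij_betw_iff_bijections)
  have fx: "f (zp x k) = k" for k using hom_to_int_zp[OF hom x(1)] x(2) by simp
  have "zp x (int (order_of x)) = e" using zp_eq_unit_iff[OF x(1)] by simp
  then have "order_of x = 0" using fx[of "int (order_of x)"] fx[of 0] by simp
  moreover have "a \<in> cyclic x" if "a \<in> G" for a
  proof -
    have "zp x (f a) = a"
      using f fx[of "f a"] that zp_closed[OF x(1)] unfolding bij_betw_def inj_on_def by blast
    then show ?thesis by (metis zp_in_cyclic)
  qed
  ultimately show ?thesis using that x(1) cyclic_subset[OF x(1)] by blast
qed

lemma closed_nbhd_zp:
  assumes x: "x \<in> G" "order_of x = 0" "cyclic x = G"
  shows "closed_nbhd G mult e (zp x u) = zp x ` dvd_comparable u"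
proof -
  have "closed_nbhd G mult e (zp x u) = {w \<in> range (zp x). w \<in> cyclic (zp x u) \<or> zp x u \<in> cyclic w}"
    using closed_nbhd_eq[OF zp_closed[OF x(1)]] x(3) unfolding cyclic_def by simp
  also have "\<dots> = zp x ` dvd_comparable u"
    unfolding dvd_comparable_def using zp_mem_cyclic_zp_iff[OF x(1,2)] by auto
  finally show ?thesis .
qed

lemma nbhd_class_zp:
  assumes x: "x \<in> G" "order_of x = 0" "cyclic x = G"
  shows "nbhd_class G mult e (zp x u) = zp x ` dvd_class u"
proof -
  have inj: "inj (zp x)" using x zp_eq_iff[OF x(1)] unfolding inj_def by auto
  have "nbhd_class G mult e (zp x u)
      = {w \<in> range (zp x). closed_nbhd G mult e w = closed_nbhd G mult e (zp x u)}"
    using x(3) unfolding nbhd_class_def cyclic_def by simp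
  also have "\<dots> = zp x ` {v. zp x ` dvd_comparable v = zp x ` dvd_comparable u}"
    using closed_nbhd_zp[OF x] by auto
  also have "\<dots> = zp x ` dvd_class u"
    unfolding dvd_class_def using inj by (simp add: inj_image_eq_iff)
  finally show ?thesis .
qed

lemma card_nbhd_class_zp:
  assumes x: "x \<in> G" "order_of x = 0" "cyclic x = G"
  shows "card (nbhd_class G mult e (zp x u)) = (if \<bar>u\<bar> \<le> 1 then 3 else 2)"
proof -
  have "inj (zp x)" using x zp_eq_iff[OF x(1)] unfolding inj_def by auto
  then show ?thesis
    using nbhd_class_zp[OF x] card_dvd_class by (simp add: card_image inj_on_subset)
qed

lemma nbhd_classes_infinite_cyclic:
  assumes x: "x \<in> G" "order_of x = 0" "cyclic x = G"
  shows "\<forall>C\<in>nbhd_classes G mult e. card C = 2 \<or> card C = 3"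
    and "countable {C\<in>nbhd_classes G mult e. card C = 2}"
    and "infinite {C\<in>nbhd_classes G mult e. card C = 2}"
    and "\<exists>!C. C \<in> nbhd_classes G mult e \<and> card C = 3"
proof -
  let ?cls = "\<lambda>u. nbhd_class G mult e (zp x u)"
  have inj: "inj (zp x)" using x zp_eq_iff[OF x(1)] unfolding inj_def by auto
  have "nbhd_classes G mult e = nbhd_class G mult e ` range (zp x)"
    using x(3) unfolding nbhd_classes_def cyclic_def by simp
  then have cls_range: "nbhd_classes G mult e = range ?cls" by (simp add: image_image)
  show "\<forall>C\<in>nbhd_classes G mult e. card C = 2 \<or> card C = 3"
    using cls_range card_nbhd_class_zp[OF x] by auto
  show "countable {C\<in>nbhd_classes G mult e. card C = 2}"
  proof (rule countable_subset)
    show "countable (nbhd_classes G mult e)" unfolding cls_range by simp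
  qed auto
  have "inj_on ?cls {2..}"
  proof (rule inj_onI)
    fix u v :: int assume uv: "u \<in> {2..}" "v \<in> {2..}" "?cls u = ?cls v"
    then have "dvd_class u = dvd_class v"
      using nbhd_class_zp[OF x] inj by (simp add: inj_image_eq_iff)
    then have "{u, -u} = {v, -v}" using dvd_class_nonunit uv by simp
    then show "u = v" using uv by (auto simp: doubleton_eq_iff)
  qed
  then have "infinite (?cls ` {2..})" using infinite_Ici finite_imageD by blast
  moreover have "?cls ` {2..} \<subseteq> {C\<in>nbhd_classes G mult e. card C = 2}"
    using cls_range card_nbhd_class_zp[OF x] by auto
  ultimately show "infinite {C\<in>nbhd_classes G mult e. card C = 2}" using finite_subset by blast
  show "\<exists>!C. C \<in> nbhd_classes G mult e \<and> card C = 3"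
  proof
    show "?cls 0 \<in> nbhd_classes G mult e \<and> card (?cls 0) = 3"
      using cls_range rangeI[of ?cls 0] card_nbhd_class_zp[OF x, of 0] by simp
  next
    fix C assume "C \<in> nbhd_classes G mult e \<and> card C = 3"
    then obtain u where "C = ?cls u" "\<bar>u\<bar> \<le> 1"
      using cls_range card_nbhd_class_zp[OF x] by (auto split: if_splits)
    then show "C = ?cls 0"
      unfolding nbhd_class_zp[OF x] using dvd_class_unit[of u] dvd_class_unit[of 0] by simp
  qed
qed

subsection \<open>Torsion loops\<close>

lemma finite_cyclic: "x \<in> G \<Longrightarrow> order_of x \<noteq> 0 \<Longrightarrow> finite (cyclic x)"
  using card_cyclic card_ge_0_finite by force

lemma cyclic_eq_if_order_of_eq:
  assumes y: "y \<in> G" "order_of y \<noteq> 0" and a: "a \<in> cyclic y" "order_of a = order_of y"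
  shows "cyclic a = cyclic y"
proof (rule card_subset_eq)
  show "finite (cyclic y)" using finite_cyclic[OF y] .
  show "cyclic a \<subseteq> cyclic y" using cyclic_mono[OF y(1) a(1)] .
  show "card (cyclic a) = card (cyclic y)"
    using card_cyclic a y(1) cyclic_subset[OF y(1)] by auto
qed

lemma closed_nbhd_eq_if_cyclic_eq:
  "a \<in> G \<Longrightarrow> b \<in> G \<Longrightarrow> cyclic a = cyclic b \<Longrightarrow> closed_nbhd G mult e a = closed_nbhd G mult e b"
  by (simp add: closed_nbhd_eq_subset)

lemma zp_coprime_in_nbhd_class:
  assumes y: "y \<in> G" "order_of y \<noteq> 0" and k: "coprime k (order_of y)"
  shows "zp y (int k) \<in> nbhd_class G mult e y"
proof -
  have "gcd (order_of y) k = 1" using k by (simp add: coprime_iff_gcd_eq_1 gcd.commute)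
  then have "order_of (zp y (int k)) = order_of y"
    using order_of_zp_nat[OF y(1), of k] by (cases "k = 0") auto
  then have "cyclic (zp y (int k)) = cyclic y" using cyclic_eq_if_order_of_eq[OF y] by simp
  then have "closed_nbhd G mult e (zp y (int k)) = closed_nbhd G mult e y"
    using closed_nbhd_eq_if_cyclic_eq[OF zp_closed[OF y(1)] y(1)] by blast
  then show ?thesis using zp_closed[OF y(1)] unfolding nbhd_class_def by blast
qed

lemma totient_order_of_le_card_nbhd_class:
  assumes y: "y \<in> G" "order_of y \<noteq> 0" and fin: "finite (nbhd_class G mult e y)"
  shows "totient (order_of y) \<le> card (nbhd_class G mult e y)"
proof -
  let ?n = "order_of y"
  let ?F = "\<lambda>k::nat. zp y (int k)"
  have "inj_on ?F (totatives ?n)"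
  proof (rule inj_onI)
    fix a b assume ab: "a \<in> totatives ?n" "b \<in> totatives ?n" "?F a = ?F b"
    then have "int ?n dvd int b - int a" using zp_eq_iff[OF y(1)] by blast
    moreover have "0 < a" "a \<le> ?n" "0 < b" "b \<le> ?n" using ab(1,2) by (auto simp: in_totatives_iff)
    ultimately show "a = b" using dvd_imp_le_int[of "int b - int a" "int ?n"] by fastforce
  qed
  moreover have "?F ` totatives ?n \<subseteq> nbhd_class G mult e y"
    using zp_coprime_in_nbhd_class[OF y] by (auto simp: in_totatives_iff)
  ultimately show ?thesis
    unfolding totient_def using card_mono[OF fin] by (metis card_image)
qed

lemma order_of_small:
  assumes "y \<in> G" "order_of y \<noteq> 0"
    and "finite (nbhd_class G mult e y)" "card (nbhd_class G mult e y) \<le> 3"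
  shows "order_of y \<in> {1, 2, 3, 4, 6}"
proof (rule ccontr)
  assume "order_of y \<notin> {1, 2, 3, 4, 6}"
  then have "4 \<le> totient (order_of y)" using totient_ge_4 assms(2) by blast
  then show False using totient_order_of_le_card_nbhd_class[OF assms(1-3)] assms(4) by linarith
qed

text \<open>Comparing the central \<open>x \<in> \<langle>y\<rangle>\<close> with \<open>y\<^sup>d\<close>, where \<open>d = o(x)\<close> and \<open>o(y\<^sup>d) = o(y)/d\<close>.\<close>
lemma pg_center_order_quotient_comparable:
  assumes xc: "x \<in> pg_center G mult e" and y: "y \<in> G" "order_of y \<noteq> 0" and xy: "x \<in> cyclic y"
  defines "d \<equiv> order_of x"
  shows "order_of y div d dvd d \<or> d dvd order_of y div d"
proof -
  have d: "d dvd order_of y" "d \<noteq> 0" using order_of_dvd[OF y(1) xy] y(2) unfolding d_def by auto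
  define z where "z = zp y (int d)"
  have oz: "order_of z = order_of y div d"
    using order_of_zp_nat[OF y(1), of d] d unfolding z_def by (simp add: gcd_nat.absorb2)
  have xG: "x \<in> G" using xc by (rule pg_center_closed)
  have zG: "z \<in> G" unfolding z_def using zp_closed[OF y(1)] .
  from pg_center_comparable[OF xc zG] show ?thesis
  proof
    assume "z \<in> cyclic x"
    then show ?thesis using order_of_dvd[OF xG] oz unfolding d_def by metis
  next
    assume "x \<in> cyclic z"
    then show ?thesis using order_of_dvd[OF zG] oz unfolding d_def by metis
  qed
qed

lemma pg_center_order_of_outside_cyclic:
  assumes xc: "x \<in> pg_center G mult e" and xe: "x \<noteq> e"
    and small: "\<forall>y\<in>G. order_of y \<in> {1, 2, 3, 4, 6}"
    and y: "y \<in> G" "y \<notin> cyclic x"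
  shows "order_of y = 4" and "order_of x = 2"
proof -
  have xG: "x \<in> G" using xc by (rule pg_center_closed)
  have xy: "x \<in> cyclic y" using pg_center_comparable[OF xc y(1)] y(2) by blast
  have oy: "order_of y \<in> {1, 2, 3, 4, 6}" using small y(1) by blast
  then have oy0: "order_of y \<noteq> 0" by auto
  have d: "order_of x dvd order_of y" using order_of_dvd[OF y(1) xy] .
  have "order_of x \<noteq> 1" using order_of_eq_1_iff[OF xG] xe by simp
  moreover have "order_of x \<noteq> order_of y"
    using cyclic_eq_if_order_of_eq[OF y(1) oy0 xy] self_in_cyclic[OF y(1)] y(2) by auto
  ultimately have "order_of y = 4 \<and> order_of x = 2"
    using proper_divisor_comparable_quotient[OF oy d]
      pg_center_order_quotient_comparable[OF xc y(1) oy0 xy] by blast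
  then show "order_of y = 4" and "order_of x = 2" by simp_all
qed

lemma closed_nbhd_outside_cyclic:
  assumes x: "x \<in> G" and same_order: "\<forall>y\<in>G - cyclic x. order_of y = m" and "m \<noteq> 0"
    and v: "v \<in> G" "v \<notin> cyclic x"
  shows "closed_nbhd G mult e v = cyclic v"
proof -
  have "cyclic w \<subseteq> cyclic v" if w: "w \<in> G" "cyclic v \<subseteq> cyclic w" for w
  proof -
    have "w \<notin> cyclic x" using cyclic_mono[OF x] w(2) self_in_cyclic[OF v(1)] v(2) by blast
    then have "cyclic v = cyclic w"
      using cyclic_eq_if_order_of_eq[OF w(1)] same_order w v self_in_cyclic[OF v(1)] \<open>m \<noteq> 0\<close>
      by (metis DiffI subsetD)
    then show ?thesis by simp
  qed
  then have "closed_nbhd G mult e v = {w \<in> G. cyclic w \<subseteq> cyclic v}"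
    using closed_nbhd_eq_subset[OF v(1)] by auto
  also have "\<dots> = cyclic v" using mem_cyclic_iff_subset[OF v(1)] cyclic_subset[OF v(1)] by auto
  finally show ?thesis .
qed

text \<open>Central elements have closed neighbourhood \<open>G\<close>, while outside \<open>\<langle>x\<rangle> = {e, x}\<close>
  the closed neighbourhood is the finite set \<open>\<langle>v\<rangle>\<close>; so a class lies in \<open>\<langle>x\<rangle>\<close> or in
  \<open>\<langle>v\<rangle> - \<langle>x\<rangle>\<close>, and both have two elements.\<close>
lemma card_nbhd_class_le_2:
  assumes xc: "x \<in> pg_center G mult e" and inf: "infinite G" and ox: "order_of x = 2"
    and outside: "\<forall>y\<in>G - cyclic x. order_of y = 4" and w: "w \<in> G"
  shows "card (nbhd_class G mult e w) \<le> 2"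
proof -
  have xG: "x \<in> G" using xc by (rule pg_center_closed)
  have card_x: "card (cyclic x) = 2" using card_cyclic[OF xG] ox by simp
  have fin_x: "finite (cyclic x)" using finite_cyclic[OF xG] ox by simp
  have "x \<noteq> e" using order_of_eq_1_iff[OF xG] ox by auto
  then have "cyclic x = {e, x}"
    using card_subset_eq[OF fin_x, of "{e, x}"] card_x unit_in_cyclic self_in_cyclic[OF xG] by auto
  then have inside: "closed_nbhd G mult e u = G" if "u \<in> cyclic x" for u
    using that closed_nbhd_pg_center[OF xc] closed_nbhd_pg_center[OF unit_in_pg_center] by auto
  have out: "closed_nbhd G mult e v = cyclic v" "finite (cyclic v)" if "v \<in> G" "v \<notin> cyclic x" for v
  proof -
    show "closed_nbhd G mult e v = cyclic v"
      using closed_nbhd_outside_cyclic[OF xG outside _ that] by simp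
    show "finite (cyclic v)" using finite_cyclic[OF that(1)] outside that by simp
  qed
  have out_ne: "closed_nbhd G mult e v \<noteq> G" if "v \<in> G" "v \<notin> cyclic x" for v
    using out[OF that] inf by auto
  have in_class: "z \<in> G" "closed_nbhd G mult e z = closed_nbhd G mult e w"
    if "z \<in> nbhd_class G mult e w" for z
    using that unfolding nbhd_class_def by auto
  show ?thesis
  proof (cases "w \<in> cyclic x")
    case True
    have "nbhd_class G mult e w \<subseteq> cyclic x"
      using in_class inside[OF True] out_ne by blast
    then show ?thesis using card_mono[OF fin_x] card_x by fastforce
  next
    case False
    have "nbhd_class G mult e w \<subseteq> cyclic w - cyclic x"
    proof
      fix z assume z: "z \<in> nbhd_class G mult e w"
      have "z \<in> closed_nbhd G mult e z" unfolding closed_nbhd_def by simp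
      then have "z \<in> cyclic w" using in_class(2)[OF z] out(1)[OF w False] by simp
      moreover have "z \<notin> cyclic x" using in_class(2)[OF z] inside out_ne[OF w False] by metis
      ultimately show "z \<in> cyclic w - cyclic x" by blast
    qed
    moreover have "cyclic x \<subseteq> cyclic w"
      using pg_center_comparable[OF xc w] False cyclic_mono[OF w] by blast
    then have "card (cyclic w - cyclic x) = 2"
      using card_Diff_subset[OF fin_x] card_cyclic[OF w] outside w False card_x by simp
    ultimately show ?thesis using card_mono out(2)[OF w False] by (metis finite_Diff)
  qed
qed

lemma torsion_card_nbhd_class_le_2:
  assumes xc: "x \<in> pg_center G mult e" and xe: "x \<noteq> e" and inf: "infinite G"
    and torsion: "\<forall>y\<in>G. finite_order mult e y"
    and small: "\<forall>y\<in>G. finite (nbhd_class G mult e y) \<and> card (nbhd_class G mult e y) \<le> 3"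
    and w: "w \<in> G"
  shows "card (nbhd_class G mult e w) \<le> 2"
proof -
  have xG: "x \<in> G" using xc by (rule pg_center_closed)
  have nonzero: "order_of y \<noteq> 0" if "y \<in> G" for y
    using torsion finite_order_iff that by blast
  have orders: "\<forall>y\<in>G. order_of y \<in> {1, 2, 3, 4, 6}"
    using order_of_small nonzero small by blast
  have "\<not> G \<subseteq> cyclic x" using finite_cyclic[OF xG nonzero[OF xG]] inf finite_subset by blast
  then obtain y where "y \<in> G" "y \<notin> cyclic x" by blast
  then have "order_of x = 2" using pg_center_order_of_outside_cyclic(2)[OF xc xe orders] by blast
  moreover have "\<forall>y\<in>G - cyclic x. order_of y = 4"
    using pg_center_order_of_outside_cyclic(1)[OF xc xe orders] by blast
  ultimately show ?thesis using card_nbhd_class_le_2[OF xc inf _ _ w] by blast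
qed

lemma pg_center_iso_to_int_or_torsion:
  assumes xc: "x \<in> pg_center G mult e" and xe: "x \<noteq> e"
  shows "iso_to_int G mult \<or> (\<forall>z\<in>G. finite_order mult e z)"
proof (rule disjCI)
  assume "\<not> (\<forall>z\<in>G. finite_order mult e z)"
  then obtain z where z: "z \<in> G" "\<not> finite_order mult e z" by blast
  then have "order_of z = 0" using finite_order_iff by simp
  moreover have "x \<in> G" using xc by (rule pg_center_closed)
  ultimately show "iso_to_int G mult"
    using infinite_cyclic_iso_to_int pg_center_infinite_cyclic[OF xc xe z(1)] by blast
qed

lemma iso_to_int_nbhd_classes:
  assumes "iso_to_int G mult"
  shows "\<forall>C\<in>nbhd_classes G mult e. card C = 2 \<or> card C = 3"
    and "countable {C\<in>nbhd_classes G mult e. card C = 2}"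
    and "infinite {C\<in>nbhd_classes G mult e. card C = 2}"
    and "\<exists>!C. C \<in> nbhd_classes G mult e \<and> card C = 3"
proof -
  obtain g where "g \<in> G" "order_of g = 0" "cyclic g = G"
    using iso_to_int_infinite_cyclic[OF assms] .
  from nbhd_classes_infinite_cyclic[OF this]
  show "\<forall>C\<in>nbhd_classes G mult e. card C = 2 \<or> card C = 3"
    and "countable {C\<in>nbhd_classes G mult e. card C = 2}"
    and "infinite {C\<in>nbhd_classes G mult e. card C = 2}"
    and "\<exists>!C. C \<in> nbhd_classes G mult e \<and> card C = 3" .
qed

lemma torsion_no_nbhd_class_card_3:
  assumes xc: "x \<in> pg_center G mult e" and xe: "x \<noteq> e"
    and torsion: "\<forall>z\<in>G. finite_order mult e z"
    and card_2_3: "\<forall>C\<in>nbhd_classes G mult e. card C = 2 \<or> card C = 3"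
    and infinite_2: "infinite {C\<in>nbhd_classes G mult e. card C = 2}"
  shows "\<forall>C\<in>nbhd_classes G mult e. card C \<noteq> 3"
proof -
  have "infinite (nbhd_classes G mult e)" using infinite_2 by (rule infinite_super[rotated]) blast
  then have "infinite G" unfolding nbhd_classes_def using finite_imageI by blast
  moreover have "finite (nbhd_class G mult e y) \<and> card (nbhd_class G mult e y) \<le> 3" if "y \<in> G" for y
    using card_2_3 that card_ge_0_finite[of "nbhd_class G mult e y"]
    unfolding nbhd_classes_def by force
  ultimately have "card (nbhd_class G mult e w) \<le> 2" if "w \<in> G" for w
    using torsion_card_nbhd_class_le_2[OF xc xe _ torsion _ that] by blast
  then show ?thesis unfolding nbhd_classes_def by force
qed

end

theorem mainTheorem1:
  fixes G :: "'a set" and mult :: "'a \<Rightarrow> 'a \<Rightarrow> 'a" and e :: 'a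
  assumes "power_assoc_loop G mult e"
    and "\<exists>x y. x \<in> pg_center G mult e \<and> y \<in> pg_center G mult e \<and> x \<noteq> y"
  shows "(iso_to_int G mult \<or> (\<forall>x\<in>G. finite_order mult e x))
       \<and> (iso_to_int G mult \<longleftrightarrow>
            ((\<forall>C\<in>nbhd_classes G mult e. card C = 2 \<or> card C = 3)
             \<and> countable {C\<in>nbhd_classes G mult e. card C = 2}
             \<and> infinite {C\<in>nbhd_classes G mult e. card C = 2}
             \<and> (\<exists>!C. C \<in> nbhd_classes G mult e \<and> card C = 3)))"
proof -
  interpret pa_loop G mult e by (rule pa_loop.intro) (rule assms(1))
  obtain x where xc: "x \<in> pg_center G mult e" and xe: "x \<noteq> e"
    using assms(2) by (metis (full_types))
  have dichotomy: "iso_to_int G mult \<or> (\<forall>z\<in>G. finite_order mult e z)"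
    by (rule pg_center_iso_to_int_or_torsion[OF xc xe])
  show ?thesis
  proof (cases "iso_to_int G mult")
    case True
    then show ?thesis using iso_to_int_nbhd_classes by blast
  next
    case False
    then have "\<forall>z\<in>G. finite_order mult e z" using dichotomy by blast
    then show ?thesis using False torsion_no_nbhd_class_card_3[OF xc xe] by blast
  qed
qed

end
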